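(* Let $n\ge2$ and $j\in[n]$. For every integer $m\ge2$, $r(m,n)\le r(m+1,n)$ and $R_j(m,n)\subseteq R_j(m+1,n)$.
   Context: General product of dimension-$n$ tensors: for $\mathbb{A}$ of order $m\ge2$ and $\mathbb{B}$ of order $k\ge1$, $(\mathbb{A}\mathbb{B})_{i\alpha_1\ldots\alpha_{m-1}}=\sum_{i_2,\ldots,i_m=1}^n a_{ii_2\ldots i_m}b_{i_2\alpha_1}\cdots b_{i_m\alpha_{m-1}}$ ($\alpha_l\in[n]^{k-1}$); it is associative and $\mathbb{A}^k$ denotes the $k$-fold power. The majorization matrix is $(M(\mathbb{C}))_{ij}=c_{ij\ldots j}$. A nonnegative tensor $\mathbb{A}$ is primitive if $M(\mathbb{A}^r)>0$ entrywise for some $r\ge1$. For $j\in[n]$, $\mathbb{A}$ is $j$-primitive if there is $k\ge1$ with $(M(\mathbb{A}^k))_{uj}>0$ for all $u\in[n]$; the least such $k$ is $\gamma_j(\mathbb{A})$. $r(m,n)$ is the maximum of $\gamma_j(\mathbb{A})$ over all nonnegative, non-primitive tensors $\mathbb{A}$ of order $m$ and dimension $n$ and all $j\in[n]$ such that $\mathbb{A}$ is $j$-primitive. $R_j(m,n)$ is the set of integers $k$ such that there exists a nonnegative, non-primitive tensor $\mathbb{A}$ of order $m$ and dimension $n$ that is $j$-primitive with $\gamma_j(\mathbb{A})=k$. *)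

theory Defs
  imports Main "HOL-Library.Extended_Nat"
begin

text \<open>A tensor of order m and dimension n is represented as a function
  on index lists; only index lists of length m with entries in
  {0..<n} (i.e. [n] shifted to 0-based) are meaningful.\<close>

type_synonym tensor = "nat list \<Rightarrow> real"

definition idx_lists :: "nat \<Rightarrow> nat \<Rightarrow> nat list set" where
  "idx_lists n l = {xs. length xs = l \<and> set xs \<subseteq> {..<n}}"

text \<open>General product of A (order m) and B (order k), dimension n.
  The result has order (m-1)(k-1)+1; the index is i followed by
  the blocks alpha_1 ... alpha_(m-1), each of length k-1.\<close>

definition tensor_prod :: "nat \<Rightarrow> nat \<Rightarrow> nat \<Rightarrow> tensor \<Rightarrow> tensor \<Rightarrow> tensor" where
  "tensor_prod n m k A B = (\<lambda>idx.
     \<Sum>is\<in>idx_lists n (m - 1).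
       A (hd idx # is) *
       (\<Prod>l<m - 1. B ((is ! l) # take (k - 1) (drop (l * (k - 1)) (tl idx)))))"

text \<open>tensor_pow n m A r is the r-fold power A^r (r \<ge> 1) of the order m
  tensor A; it has order (m-1)^r + 1.  The value for r = 0 is a dummy.\<close>

fun tensor_pow :: "nat \<Rightarrow> nat \<Rightarrow> tensor \<Rightarrow> nat \<Rightarrow> tensor" where
  "tensor_pow n m A 0 = A"
| "tensor_pow n m A (Suc 0) = A"
| "tensor_pow n m A (Suc (Suc r)) =
     tensor_prod n ((m - 1) ^ Suc r + 1) m (tensor_pow n m A (Suc r)) A"

definition maj_mat :: "nat \<Rightarrow> tensor \<Rightarrow> nat \<Rightarrow> nat \<Rightarrow> real" where
  "maj_mat ord C i j = C (i # replicate (ord - 1) j)"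

definition nonneg_tensor :: "nat \<Rightarrow> nat \<Rightarrow> tensor \<Rightarrow> bool" where
  "nonneg_tensor m n A \<longleftrightarrow> (\<forall>idx\<in>idx_lists n m. 0 \<le> A idx)"

definition primitive_tensor :: "nat \<Rightarrow> nat \<Rightarrow> tensor \<Rightarrow> bool" where
  "primitive_tensor m n A \<longleftrightarrow>
     (\<exists>r\<ge>1. \<forall>i<n. \<forall>j<n. maj_mat ((m - 1) ^ r + 1) (tensor_pow n m A r) i j > 0)"

definition j_primitive_at :: "nat \<Rightarrow> nat \<Rightarrow> tensor \<Rightarrow> nat \<Rightarrow> nat \<Rightarrow> bool" where
  "j_primitive_at m n A j k \<longleftrightarrow>
     k \<ge> 1 \<and> (\<forall>u<n. maj_mat ((m - 1) ^ k + 1) (tensor_pow n m A k) u j > 0)"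

definition j_primitive :: "nat \<Rightarrow> nat \<Rightarrow> tensor \<Rightarrow> nat \<Rightarrow> bool" where
  "j_primitive m n A j \<longleftrightarrow> (\<exists>k. j_primitive_at m n A j k)"

definition gamma_j :: "nat \<Rightarrow> nat \<Rightarrow> tensor \<Rightarrow> nat \<Rightarrow> nat" where
  "gamma_j m n A j = (LEAST k. j_primitive_at m n A j k)"

definition R_set :: "nat \<Rightarrow> nat \<Rightarrow> nat \<Rightarrow> nat set" where
  "R_set j m n = {k. \<exists>A. nonneg_tensor m n A \<and> \<not> primitive_tensor m n A \<and>
                        j_primitive m n A j \<and> gamma_j m n A j = k}"

text \<open>r(m,n): the maximum of gamma_j over all admissible A and j, taken as
  a supremum in enat (equals the maximum whenever that exists).\<close>

definition r_max :: "nat \<Rightarrow> nat \<Rightarrow> enat" where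
  "r_max m n = Sup (enat ` (\<Union>j\<in>{..<n}. R_set j m n))"

end

theory Submission
  imports Defs
begin

text \<open>Whether an entry of a power of a nonnegative tensor is positive depends only on the
  zero pattern of the tensor. For a set S of indices let T S be the set of rows i having a
  positive entry a(i, i2, ..., im) with i2, ..., im all in S. Then the entry (M(A^k))(u, j)
  is positive iff u lies in T^k {j}, so j-primitivity, gamma_j and primitivity are all
  determined by T. Repeating an index, b(i, i2, i3, ..., i(m+1)) = a(i, i3, ..., i(m+1)) if
  i2 = i3 and 0 otherwise, gives a tensor of order m + 1 with the same T, and so realises
  in order m + 1 every exponent realised in order m.\<close>

lemma sum_pos_iff_ex_pos:
  fixes f :: "'a \<Rightarrow> 'b::linordered_ab_group_add"
  assumes "finite I" and "\<And>x. x \<in> I \<Longrightarrow> 0 \<le> f x"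
  shows "0 < sum f I \<longleftrightarrow> (\<exists>x\<in>I. 0 < f x)"
proof
  assume "0 < sum f I"
  then obtain x where "x \<in> I" and "f x \<noteq> 0"
    using sum_nonneg_eq_0_iff[OF assms] by fastforce
  then show "\<exists>x\<in>I. 0 < f x" using assms(2) by (metis less_le)
next
  assume "\<exists>x\<in>I. 0 < f x"
  then show "0 < sum f I" using assms by (blast intro: sum_pos2)
qed

lemma prod_pos_iff_all_pos:
  fixes f :: "'a \<Rightarrow> 'b::linordered_idom"
  assumes "finite I" and "\<And>x. x \<in> I \<Longrightarrow> 0 \<le> f x"
  shows "0 < prod f I \<longleftrightarrow> (\<forall>x\<in>I. 0 < f x)"
proof
  assume "0 < prod f I"
  then have "\<forall>x\<in>I. f x \<noteq> 0" using assms(1) by (metis less_irrefl prod_zero)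
  then show "\<forall>x\<in>I. 0 < f x" using assms(2) by (metis less_le)
next
  assume "\<forall>x\<in>I. 0 < f x"
  then show "0 < prod f I" by (blast intro: prod_pos)
qed

lemma take_drop_concat_blocks:
  assumes "\<forall>c\<in>set L. length c = N" and "l < length L"
  shows "take N (drop (l * N) (concat L)) = L ! l"
  using assms
proof (induction L arbitrary: l)
  case (Cons c L)
  then show ?case by (cases l) auto
qed simp

lemma set_take_drop_subset: "set (take k (drop l xs)) \<subseteq> set xs"
  by (meson order_trans set_drop_subset set_take_subset)

lemma finite_idx_lists: "finite (idx_lists n l)"
  unfolding idx_lists_def using finite_lists_length_eq[of "{..<n}" l]
  by (simp add: conj_commute)

lemma Cons_in_idx_lists_iff [simp]:
  "i # xs \<in> idx_lists n (Suc l) \<longleftrightarrow> i < n \<and> xs \<in> idx_lists n l"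
  by (auto simp: idx_lists_def)

lemma idx_lists_nth_less:
  assumes "xs \<in> idx_lists n l" and "k < l"
  shows "xs ! k < n"
  using assms nth_mem[of k xs] unfolding idx_lists_def by fastforce

lemma idx_lists_block:
  assumes "xs \<in> idx_lists n (K * N)" and "l < K"
  shows "take N (drop (l * N) xs) \<in> idx_lists n N"
proof -
  have "Suc l * N \<le> K * N" using assms(2) by (intro mult_le_mono1) simp
  then show ?thesis
    using assms(1) set_take_drop_subset[of N "l * N" xs] unfolding idx_lists_def by auto
qed

lemma ex_idx_lists_blocks_iff:
  assumes "length ys = K"
  shows "(\<exists>xs\<in>idx_lists n (K * N). set xs \<subseteq> S \<and>
            (\<forall>l<K. P (ys ! l) (take N (drop (l * N) xs))))
         \<longleftrightarrow> (\<forall>y\<in>set ys. \<exists>c\<in>idx_lists n N. set c \<subseteq> S \<and> P y c)"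
proof
  assume "\<exists>xs\<in>idx_lists n (K * N). set xs \<subseteq> S \<and> (\<forall>l<K. P (ys ! l) (take N (drop (l * N) xs)))"
  then obtain xs where xs: "xs \<in> idx_lists n (K * N)" and "set xs \<subseteq> S"
    and P: "\<forall>l<K. P (ys ! l) (take N (drop (l * N) xs))" by blast
  show "\<forall>y\<in>set ys. \<exists>c\<in>idx_lists n N. set c \<subseteq> S \<and> P y c"
  proof
    fix y assume "y \<in> set ys"
    then obtain l where "l < K" and "y = ys ! l" using assms by (auto simp: in_set_conv_nth)
    then show "\<exists>c\<in>idx_lists n N. set c \<subseteq> S \<and> P y c"
      using idx_lists_block[OF xs] P \<open>set xs \<subseteq> S\<close> set_take_drop_subset[of N "l * N" xs]
      by blast
  qed
next
  assume "\<forall>y\<in>set ys. \<exists>c\<in>idx_lists n N. set c \<subseteq> S \<and> P y c"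
  then obtain ch where ch: "\<And>y. y \<in> set ys \<Longrightarrow> ch y \<in> idx_lists n N \<and> set (ch y) \<subseteq> S \<and> P y (ch y)"
    by metis
  define xs where "xs = concat (map ch ys)"
  have lengths: "\<forall>c\<in>set (map ch ys). length c = N"
    using ch unfolding idx_lists_def by auto
  then have "length xs = K * N"
    unfolding xs_def using assms by (induction ys arbitrary: K) auto
  then have "xs \<in> idx_lists n (K * N)" and "set xs \<subseteq> S"
    using ch unfolding xs_def idx_lists_def by auto
  moreover have "take N (drop (l * N) xs) = ch (ys ! l)" if "l < K" for l
    using take_drop_concat_blocks[OF lengths] that assms unfolding xs_def by simp
  ultimately show "\<exists>xs\<in>idx_lists n (K * N). set xs \<subseteq> S \<and>
      (\<forall>l<K. P (ys ! l) (take N (drop (l * N) xs)))"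
    using ch assms by auto
qed

definition reach_step :: "nat \<Rightarrow> nat \<Rightarrow> tensor \<Rightarrow> nat set \<Rightarrow> nat set" where
  "reach_step n m A S = {i. i < n \<and> (\<exists>c\<in>idx_lists n (m - 1). 0 < A (i # c) \<and> set c \<subseteq> S)}"

lemma tensor_pow_Suc_Suc:
  "tensor_pow n m A (Suc (Suc r)) (i # xs) =
     (\<Sum>ys\<in>idx_lists n ((m - 1) ^ Suc r). tensor_pow n m A (Suc r) (i # ys) *
        (\<Prod>l<(m - 1) ^ Suc r. A ((ys ! l) # take (m - 1) (drop (l * (m - 1)) xs))))"
  by (simp add: tensor_prod_def)

lemma nonneg_tensor_Cons:
  assumes "nonneg_tensor m n A" and "0 < m" and "i < n" and "c \<in> idx_lists n (m - 1)"
  shows "0 \<le> A (i # c)"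
  using assms Cons_in_idx_lists_iff[of i c n "m - 1"] unfolding nonneg_tensor_def by simp

lemma tensor_pow_Suc_nonneg:
  assumes "nonneg_tensor m n A" and "0 < m" and "i < n"
    and "xs \<in> idx_lists n ((m - 1) ^ Suc r)"
  shows "0 \<le> tensor_pow n m A (Suc r) (i # xs)"
  using assms(3,4)
proof (induction r arbitrary: xs)
  case 0
  then show ?case using nonneg_tensor_Cons[OF assms(1,2)] by simp
next
  case (Suc r)
  then have xs: "xs \<in> idx_lists n ((m - 1) ^ Suc r * (m - 1))" by (metis power_Suc2)
  show ?case
    unfolding tensor_pow_Suc_Suc
    using Suc idx_lists_block[OF xs] idx_lists_nth_less nonneg_tensor_Cons[OF assms(1,2)]
    by (intro sum_nonneg mult_nonneg_nonneg prod_nonneg) auto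
qed

lemma tensor_pow_Suc_Suc_pos_iff:
  assumes nonneg: "nonneg_tensor m n A" and "0 < m" and "i < n"
    and xs: "xs \<in> idx_lists n ((m - 1) ^ Suc r * (m - 1))"
  shows "0 < tensor_pow n m A (Suc (Suc r)) (i # xs) \<longleftrightarrow>
    (\<exists>ys\<in>idx_lists n ((m - 1) ^ Suc r). 0 < tensor_pow n m A (Suc r) (i # ys) \<and>
       (\<forall>l<(m - 1) ^ Suc r. 0 < A ((ys ! l) # take (m - 1) (drop (l * (m - 1)) xs))))"
proof -
  define K where "K = (m - 1) ^ Suc r"
  define F where "F ys l = A ((ys ! l) # take (m - 1) (drop (l * (m - 1)) xs))" for ys l
  have F_nonneg: "0 \<le> F ys l" if "ys \<in> idx_lists n K" and "l < K" for ys l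
    using nonneg_tensor_Cons[OF nonneg \<open>0 < m\<close> idx_lists_nth_less[OF that]]
      idx_lists_block[OF xs[folded K_def] \<open>l < K\<close>]
    unfolding F_def by simp
  have pow_nonneg: "0 \<le> tensor_pow n m A (Suc r) (i # ys)" if "ys \<in> idx_lists n K" for ys
    using tensor_pow_Suc_nonneg[OF nonneg \<open>0 < m\<close> \<open>i < n\<close>] that unfolding K_def by simp
  have term_pos_iff: "0 < tensor_pow n m A (Suc r) (i # ys) * (\<Prod>l<K. F ys l) \<longleftrightarrow>
      0 < tensor_pow n m A (Suc r) (i # ys) \<and> (\<forall>l<K. 0 < F ys l)"
    if "ys \<in> idx_lists n K" for ys
    using pow_nonneg[OF that] prod_pos_iff_all_pos[of "{..<K}" "F ys"] F_nonneg[OF that]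
      prod_nonneg[of "{..<K}" "F ys"]
    by (auto simp: zero_less_mult_iff)
  have "0 < tensor_pow n m A (Suc (Suc r)) (i # xs) \<longleftrightarrow>
      (\<exists>ys\<in>idx_lists n K. 0 < tensor_pow n m A (Suc r) (i # ys) * (\<Prod>l<K. F ys l))"
    unfolding tensor_pow_Suc_Suc K_def[symmetric] F_def[symmetric]
    using pow_nonneg F_nonneg
    by (intro sum_pos_iff_ex_pos finite_idx_lists mult_nonneg_nonneg prod_nonneg) auto
  then show ?thesis using term_pos_iff unfolding K_def F_def by auto
qed

theorem tensor_pow_pos_iff_reach_step:
  assumes "nonneg_tensor m n A" and "0 < m" and "i < n"
  shows "(\<exists>xs\<in>idx_lists n ((m - 1) ^ Suc r). 0 < tensor_pow n m A (Suc r) (i # xs) \<and> set xs \<subseteq> S)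
         \<longleftrightarrow> i \<in> (reach_step n m A ^^ Suc r) S"
proof (induction r arbitrary: S)
  case 0
  show ?case using \<open>i < n\<close> by (auto simp: reach_step_def)
next
  case (Suc r)
  define K where "K = (m - 1) ^ Suc r"
  have "(\<exists>xs\<in>idx_lists n ((m - 1) ^ Suc (Suc r)).
          0 < tensor_pow n m A (Suc (Suc r)) (i # xs) \<and> set xs \<subseteq> S)
      \<longleftrightarrow> (\<exists>ys\<in>idx_lists n K. 0 < tensor_pow n m A (Suc r) (i # ys) \<and>
          (\<exists>xs\<in>idx_lists n (K * (m - 1)). set xs \<subseteq> S \<and>
            (\<forall>l<K. 0 < A ((ys ! l) # take (m - 1) (drop (l * (m - 1)) xs)))))"
    using tensor_pow_Suc_Suc_pos_iff[OF assms, where r = r]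
    unfolding power_Suc2[of _ "Suc r"] K_def[symmetric] by blast
  also have "\<dots> \<longleftrightarrow> (\<exists>ys\<in>idx_lists n K. 0 < tensor_pow n m A (Suc r) (i # ys) \<and>
                       set ys \<subseteq> reach_step n m A S)"
  proof -
    have "(\<exists>xs\<in>idx_lists n (K * (m - 1)). set xs \<subseteq> S \<and>
            (\<forall>l<K. 0 < A ((ys ! l) # take (m - 1) (drop (l * (m - 1)) xs))))
          \<longleftrightarrow> set ys \<subseteq> reach_step n m A S" if "ys \<in> idx_lists n K" for ys
      using that ex_idx_lists_blocks_iff[where ys = ys and P = "\<lambda>y c. 0 < A (y # c)"]
      by (auto simp: idx_lists_def reach_step_def)
    then show ?thesis by blast
  qed
  also have "\<dots> \<longleftrightarrow> i \<in> (reach_step n m A ^^ Suc (Suc r)) S"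
    using Suc.IH[of "reach_step n m A S"] unfolding K_def funpow_Suc_right o_apply .
  finally show ?case .
qed

lemma maj_mat_tensor_pow_pos_iff:
  assumes "nonneg_tensor m n A" and "0 < m" and "u < n" and "j < n" and "1 \<le> k"
  shows "0 < maj_mat ((m - 1) ^ k + 1) (tensor_pow n m A k) u j \<longleftrightarrow>
         u \<in> (reach_step n m A ^^ k) {j}"
proof -
  obtain r where k: "k = Suc r" using \<open>1 \<le> k\<close> by (cases k) auto
  define js where "js = replicate ((m - 1) ^ k) j"
  have js: "js \<in> idx_lists n ((m - 1) ^ k)"
    using \<open>j < n\<close> by (auto simp: idx_lists_def js_def)
  have only_js: "xs = js" if "xs \<in> idx_lists n ((m - 1) ^ k)" and "set xs \<subseteq> {j}" for xs
    using that unfolding js_def by (intro replicate_eqI) (auto simp: idx_lists_def)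
  have "0 < maj_mat ((m - 1) ^ k + 1) (tensor_pow n m A k) u j \<longleftrightarrow>
        0 < tensor_pow n m A k (u # js)"
    by (simp add: maj_mat_def js_def)
  also have "\<dots> \<longleftrightarrow>
      (\<exists>xs\<in>idx_lists n ((m - 1) ^ k). 0 < tensor_pow n m A k (u # xs) \<and> set xs \<subseteq> {j})"
  proof
    assume "0 < tensor_pow n m A k (u # js)"
    then show "\<exists>xs\<in>idx_lists n ((m - 1) ^ k). 0 < tensor_pow n m A k (u # xs) \<and> set xs \<subseteq> {j}"
      using js by (intro bexI[of _ js]) (auto simp: js_def)
  qed (use only_js in blast)
  also have "\<dots> \<longleftrightarrow> u \<in> (reach_step n m A ^^ k) {j}"
    unfolding k by (rule tensor_pow_pos_iff_reach_step[OF assms(1-3)])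
  finally show ?thesis .
qed

lemma j_primitive_at_iff_reach_step:
  assumes "nonneg_tensor m n A" and "0 < m" and "j < n"
  shows "j_primitive_at m n A j k \<longleftrightarrow> 1 \<le> k \<and> (\<forall>u<n. u \<in> (reach_step n m A ^^ k) {j})"
  unfolding j_primitive_at_def using maj_mat_tensor_pow_pos_iff[OF assms(1,2) _ assms(3)] by auto

lemma primitive_tensor_iff_reach_step:
  assumes "nonneg_tensor m n A" and "0 < m"
  shows "primitive_tensor m n A \<longleftrightarrow> (\<exists>r\<ge>1. \<forall>i<n. \<forall>j<n. i \<in> (reach_step n m A ^^ r) {j})"
  unfolding primitive_tensor_def using maj_mat_tensor_pow_pos_iff[OF assms] by (metis (no_types, lifting))

fun lift_order :: "tensor \<Rightarrow> tensor" where
  "lift_order A (i # x # y # c) = (if x = y then A (i # y # c) else 0)"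
| "lift_order A _ = 0"

lemma nonneg_tensor_lift_order:
  assumes "nonneg_tensor m n A"
  shows "nonneg_tensor (m + 1) n (lift_order A)"
  unfolding nonneg_tensor_def
proof
  fix idx assume "idx \<in> idx_lists n (m + 1)"
  then show "0 \<le> lift_order A idx"
    using assms unfolding nonneg_tensor_def
    by (cases "(A, idx)" rule: lift_order.cases) (auto simp: idx_lists_def)
qed

lemma reach_step_lift_order:
  assumes "2 \<le> m"
  shows "reach_step n (m + 1) (lift_order A) = reach_step n m A"
proof -
  have "(\<exists>c'\<in>idx_lists n m. 0 < lift_order A (i # c') \<and> set c' \<subseteq> S) \<longleftrightarrow>
        (\<exists>c\<in>idx_lists n (m - 1). 0 < A (i # c) \<and> set c \<subseteq> S)" for i S
  proof
    assume "\<exists>c'\<in>idx_lists n m. 0 < lift_order A (i # c') \<and> set c' \<subseteq> S"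
    then obtain c' where c': "c' \<in> idx_lists n m" "0 < lift_order A (i # c')" "set c' \<subseteq> S"
      by blast
    then obtain y c where "c' = y # y # c" and "0 < A (i # y # c)"
      using assms by (cases "(A, i # c')" rule: lift_order.cases)
        (auto simp: idx_lists_def split: if_splits)
    then show "\<exists>c\<in>idx_lists n (m - 1). 0 < A (i # c) \<and> set c \<subseteq> S"
      using c' by (intro bexI[of _ "y # c"]) (auto simp: idx_lists_def)
  next
    assume "\<exists>c\<in>idx_lists n (m - 1). 0 < A (i # c) \<and> set c \<subseteq> S"
    then obtain c where c: "c \<in> idx_lists n (m - 1)" "0 < A (i # c)" "set c \<subseteq> S"
      by blast
    moreover obtain y c\<^sub>0 where "c = y # c\<^sub>0"
      using c(1) assms by (cases c) (auto simp: idx_lists_def)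
    ultimately show "\<exists>c'\<in>idx_lists n m. 0 < lift_order A (i # c') \<and> set c' \<subseteq> S"
      using assms by (intro bexI[of _ "y # y # c\<^sub>0"]) (auto simp: idx_lists_def)
  qed
  then show ?thesis unfolding reach_step_def by simp
qed

lemma R_set_mono_order:
  assumes "j < n" and "2 \<le> m"
  shows "R_set j m n \<subseteq> R_set j (m + 1) n"
proof
  fix k assume "k \<in> R_set j m n"
  then obtain A where nonneg: "nonneg_tensor m n A" and "\<not> primitive_tensor m n A"
    and "j_primitive m n A j" and "gamma_j m n A j = k" unfolding R_set_def by blast
  have nonneg': "nonneg_tensor (m + 1) n (lift_order A)"
    using nonneg_tensor_lift_order[OF nonneg] .
  have "0 < m" and "0 < m + 1" using \<open>2 \<le> m\<close> by auto
  have same_reach: "reach_step n (m + 1) (lift_order A) = reach_step n m A"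
    using reach_step_lift_order[OF \<open>2 \<le> m\<close>] .
  have "j_primitive_at (m + 1) n (lift_order A) j = j_primitive_at m n A j"
    using j_primitive_at_iff_reach_step[OF nonneg' \<open>0 < m + 1\<close> \<open>j < n\<close>]
      j_primitive_at_iff_reach_step[OF nonneg \<open>0 < m\<close> \<open>j < n\<close>] same_reach by auto
  moreover have "primitive_tensor (m + 1) n (lift_order A) \<longleftrightarrow> primitive_tensor m n A"
    using primitive_tensor_iff_reach_step[OF nonneg' \<open>0 < m + 1\<close>]
      primitive_tensor_iff_reach_step[OF nonneg \<open>0 < m\<close>] same_reach by simp
  ultimately show "k \<in> R_set j (m + 1) n"
    using nonneg' \<open>\<not> primitive_tensor m n A\<close> \<open>j_primitive m n A j\<close> \<open>gamma_j m n A j = k\<close>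
    unfolding R_set_def j_primitive_def gamma_j_def by (intro CollectI exI[of _ "lift_order A"]) simp
qed

theorem proposition4p10:
  fixes n j m :: nat
  assumes "n \<ge> 2" and "j < n" and "m \<ge> 2"
  shows "r_max m n \<le> r_max (m + 1) n \<and> R_set j m n \<subseteq> R_set j (m + 1) n"
proof
  have "(\<Union>j\<in>{..<n}. R_set j m n) \<subseteq> (\<Union>j\<in>{..<n}. R_set j (m + 1) n)"
    using R_set_mono_order[OF _ assms(3)] by blast
  then show "r_max m n \<le> r_max (m + 1) n"
    unfolding r_max_def by (rule Sup_subset_mono[OF image_mono])
  show "R_set j m n \<subseteq> R_set j (m + 1) n"
    using R_set_mono_order[OF assms(2,3)] .
qed

end
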